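(* Let $\Lambda$ be a finite or countable alphabet and $\mu$ a shift-invariant probability measure on $\Lambda^{\mathbb N}$ such that $(\Lambda^{\mathbb N},\mu,\sigma)$ is mixing of all orders but $\mu$ is not a Bernoulli (i.i.d. product) measure. Then there exist $k\ge2$, a block $B\in\Lambda^k$ and a vector $\bar p_0\in\mathbb N_0^{k-1}$ such that $\mu([B^{\bar q}])<\mu([B^{\bar p_0}])$ for all $\bar q\in\mathbb N_0^{k-1}$ with $\bar q\succ\bar p_0$.
   Context: For $B=(b_1,\dots,b_k)$ and $\bar p=(p_1,\dots,p_{k-1})\in\mathbb N_0^{k-1}$, $B^{\bar p}=(b_1,*^{p_1},b_2,*^{p_2},\dots,b_{k-1},*^{p_{k-1}},b_k)$, and $[B^{\bar p}]$ is the set of $z\in\Lambda^{\mathbb N}$ with $z_{n_i}=b_i$ for $i=1,\dots,k$, where $n_i=i+p_1+\dots+p_{i-1}$ (other coordinates arbitrary). On $\mathbb N_0^{k-1}$, $\bar p\prec\bar q$ means $p_i\le q_i$ for all $i$ with strict inequality for at least one $i$. Mixing of all orders: for all measurable $A_0,\dots,A_k$, $\mu(A_0\cap\sigma^{-n_1}A_1\cap\sigma^{-n_1-n_2}A_2\cap\dots\cap\sigma^{-n_1-\dots-n_k}A_k)\to\mu(A_0)\cdots\mu(A_k)$ as $n_1,\dots,n_k\to\infty$. A Bernoulli measure satisfies $\mu([b_1\dots b_k])=\mu([b_1])\cdots\mu([b_k])$ for all blocks. *)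

theory Defs
  imports "HOL-Probability.Probability"
begin

text \<open>Sequence space Lambda^N as functions nat => 'a, with the product sigma-algebra
  of the discrete sigma-algebras. Coordinates are 0-indexed (z 0 is the paper's z_1).\<close>

definition seq_space :: "(nat \<Rightarrow> 'a) measure" where
  "seq_space = PiM UNIV (\<lambda>_. count_space UNIV)"

definition shift :: "(nat \<Rightarrow> 'a) \<Rightarrow> (nat \<Rightarrow> 'a)" where
  "shift z = (\<lambda>n. z (Suc n))"

definition shift_invariant :: "(nat \<Rightarrow> 'a) measure \<Rightarrow> bool" where
  "shift_invariant M \<longleftrightarrow> (\<forall>A\<in>sets M. measure M (shift -` A \<inter> space M) = measure M A)"

definition mixing_all_orders :: "(nat \<Rightarrow> 'a) measure \<Rightarrow> bool" where
  "mixing_all_orders M \<longleftrightarrow>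
     (\<forall>k::nat. \<forall>A::nat \<Rightarrow> (nat \<Rightarrow> 'a) set. (\<forall>i\<le>k. A i \<in> sets M) \<longrightarrow>
       (\<forall>\<epsilon>>0. \<exists>N. \<forall>n::nat \<Rightarrow> nat. (\<forall>i\<in>{1..k}. N \<le> n i) \<longrightarrow>
          \<bar>measure M (\<Inter>i\<in>{..k}. (shift ^^ (\<Sum>j\<in>{1..i}. n j)) -` A i \<inter> space M)
             - (\<Prod>i\<in>{..k}. measure M (A i))\<bar> < \<epsilon>))"

definition cyl :: "'a list \<Rightarrow> (nat \<Rightarrow> 'a) set" where
  "cyl bs = {z. \<forall>i<length bs. z i = bs ! i}"

definition bernoulli_measure :: "(nat \<Rightarrow> 'a) measure \<Rightarrow> bool" where
  "bernoulli_measure M \<longleftrightarrow>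
     (\<forall>bs. measure M (cyl bs) = (\<Prod>i<length bs. measure M (cyl [bs ! i])))"

text \<open>Gapped cylinder [B^p]: with 0-indexed i, the symbol B!i sits at position
  i + p!0 + ... + p!(i-1) (0-indexed), i.e. the paper's n_i shifted by one.\<close>
definition gcyl :: "'a list \<Rightarrow> nat list \<Rightarrow> (nat \<Rightarrow> 'a) set" where
  "gcyl B p = {z. \<forall>i<length B. z (i + (\<Sum>j<i. p ! j)) = B ! i}"

definition vec_prec :: "nat list \<Rightarrow> nat list \<Rightarrow> bool" where
  "vec_prec p q \<longleftrightarrow> length p = length q \<and> (\<forall>i<length p. p ! i \<le> q ! i)
      \<and> (\<exists>i<length p. p ! i < q ! i)"

end

theory Submission
  imports Defs
begin

(* Let k be the least length for which gapped cylinders [B^p] do not always have the product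
   measure mu[b_1] ... mu[b_k]; it exists because mu is not Bernoulli, and k >= 2.
   Summing over the last symbol, minimality of k gives a block B and gaps p with
   mu[B^p] > L := mu[b_1] ... mu[b_k].
   If no gap vector were a strict local maximum of q |-> mu[B^q] for the order on gaps, dependent
   choice would give an increasing chain q_n with mu[B^(q_n)] >= mu[B^p]. Along the chain some
   gaps diverge and the others freeze, so [B^(q_n)] splits into fixed shorter blocks pushed apart;
   mixing of all orders and minimality of k force mu[B^(q_n)] --> L, a contradiction. *)

definition gap_pos :: "nat list \<Rightarrow> nat \<Rightarrow> nat" where
  "gap_pos p i = i + (\<Sum>j<i. p ! j)"

lemma gap_pos_0 [simp]: "gap_pos p 0 = 0"
  by (simp add: gap_pos_def)

lemma gap_pos_Suc: "gap_pos p (Suc i) = gap_pos p i + 1 + p ! i"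
  by (simp add: gap_pos_def)

lemma gap_pos_add_drop:
  assumes "lo \<le> length p"
  shows "gap_pos p (lo + l) = gap_pos p lo + gap_pos (drop lo p) l"
  by (induction l) (simp_all add: gap_pos_Suc assms)

lemma gap_pos_gap_less:
  assumes "i < j"
  shows "gap_pos p i + p ! (j - 1) < gap_pos p j"
  using assms
proof (induction j)
  case (Suc j)
  then show ?case
    by (cases "i = j") (auto simp: gap_pos_Suc gap_pos_def)
qed simp

lemma gcyl_iff: "z \<in> gcyl B p \<longleftrightarrow> (\<forall>i<length B. z (gap_pos p i) = B ! i)"
  by (simp add: gcyl_def gap_pos_def)

lemma gcyl_cong:
  assumes "\<And>j. Suc j < length B \<Longrightarrow> p ! j = q ! j"
  shows "gcyl B p = gcyl B q"
proof -
  have "gap_pos p i = gap_pos q i" if "i < length B" for i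
    unfolding gap_pos_def using that assms by (intro arg_cong2[where f = "(+)"] sum.cong) auto
  then show ?thesis
    by (auto simp: gcyl_iff)
qed

lemma gcyl_truncate_gaps: "gcyl B p = gcyl B (map (\<lambda>j. p ! j) [0..<length B - 1])"
  by (rule gcyl_cong) simp

lemma gcyl_Nil [simp]: "gcyl [] p = UNIV"
  by (simp add: gcyl_def)

lemma gcyl_singleton: "gcyl [c] p = cyl [c]"
  by (auto simp: gcyl_def cyl_def)

lemma cyl_eq_gcyl: "cyl bs = gcyl bs (replicate (length bs) 0)"
proof -
  have "gap_pos (replicate (length bs) 0) i = i" if "i < length bs" for i
    using that by (simp add: gap_pos_def)
  then show ?thesis
    by (auto simp: gcyl_iff cyl_def)
qed

lemma gcyl_snoc: "gcyl (B @ [c]) p = gcyl B p \<inter> {z. z (gap_pos p (length B)) = c}"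
  by (auto simp: gcyl_iff nth_append less_Suc_eq)

lemma space_seq_space [simp]: "space seq_space = UNIV"
  by (simp add: seq_space_def space_PiM)

lemma gcyl_in_sets_seq_space: "gcyl B p \<in> sets seq_space"
proof -
  have "gcyl B p = {z \<in> space seq_space. \<forall>i\<in>{..<length B}. z (gap_pos p i) = B ! i}"
    by (auto simp: gcyl_iff)
  also have "\<dots> \<in> sets seq_space"
    unfolding seq_space_def by measurable
  finally show ?thesis .
qed

lemma gcyl_in_sets:
  assumes "sets M = sets seq_space"
  shows "gcyl B p \<in> sets M"
  using gcyl_in_sets_seq_space assms by blast

lemma has_sum_measure_disjoint_UN:
  fixes D :: "'i::countable \<Rightarrow> 'b set"
  assumes "finite_measure M" "\<And>i. D i \<in> sets M" "disjoint_family D"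
  shows "((\<lambda>i. measure M (D i)) has_sum measure M (\<Union>i. D i)) UNIV"
proof -
  \<comment> \<open>Reindex along to_nat, so that measure_UNION for nat-indexed families applies.\<close>
  define X where "X n = (\<Union>i\<in>to_nat -` {n}. D i)" for n
  have X_eq: "X (to_nat i) = D i" for i
    by (auto simp: X_def)
  have X_empty: "n \<notin> range (to_nat :: 'i \<Rightarrow> nat) \<Longrightarrow> X n = {}" for n
    unfolding X_def by (auto simp: image_def)
  have "(\<lambda>n. measure M (X n)) sums measure M (\<Union>n. X n)"
  proof (rule measure_UNION)
    show "range X \<subseteq> sets M"
      using assms(2) by (auto simp: X_def intro!: sets.countable_UN')
    show "disjoint_family X"
      using assms(3) unfolding X_def disjoint_family_on_def by (auto 0 3)
    show "emeasure M (\<Union>n. X n) \<noteq> \<infinity>"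
      using assms(1) by (simp add: finite_measure.emeasure_finite)
  qed
  moreover have "(\<Union>n. X n) = (\<Union>i. D i)"
    by (auto simp: X_def)
  ultimately have "((\<lambda>n. measure M (X n)) has_sum measure M (\<Union>i. D i)) UNIV"
    by (auto intro: sums_nonneg_imp_has_sum)
  then have "((\<lambda>n. measure M (X n)) has_sum measure M (\<Union>i. D i)) (range (to_nat :: 'i \<Rightarrow> nat))"
    by (rule has_sum_cong_neutral[THEN iffD1, rotated -1]) (auto simp: X_empty)
  then show ?thesis
    by (simp add: has_sum_reindex comp_def X_eq)
qed

lemma has_sum_measure_gcyl_snoc:
  fixes M :: "(nat \<Rightarrow> 'a::countable) measure"
  assumes "finite_measure M" and "sets M = sets seq_space"
  shows "((\<lambda>c. measure M (gcyl (B @ [c]) p)) has_sum measure M (gcyl B p)) UNIV"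
proof -
  have "(\<Union>c. gcyl (B @ [c]) p) = gcyl B p"
    unfolding gcyl_snoc by blast
  moreover have "disjoint_family (\<lambda>c. gcyl (B @ [c]) p)"
    unfolding gcyl_snoc disjoint_family_on_def by blast
  ultimately show ?thesis
    using has_sum_measure_disjoint_UN[OF assms(1) gcyl_in_sets[OF assms(2)],
        of "\<lambda>c. B @ [c]" "\<lambda>_. p"]
    by simp
qed

definition gcyl_factorizes :: "(nat \<Rightarrow> 'a) measure \<Rightarrow> nat \<Rightarrow> bool" where
  "gcyl_factorizes M k \<longleftrightarrow>
     (\<forall>B p. length B = k \<longrightarrow> measure M (gcyl B p) = (\<Prod>i<k. measure M (cyl [B ! i])))"

lemma gcyl_factorizes_0:
  assumes "prob_space M" and "sets M = sets seq_space"
  shows "gcyl_factorizes M 0"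
proof -
  have "space M = UNIV"
    using sets_eq_imp_space_eq[OF assms(2)] by simp
  then show ?thesis
    using prob_space.prob_space[OF assms(1)] by (simp add: gcyl_factorizes_def)
qed

lemma gcyl_factorizes_1: "gcyl_factorizes M 1"
  by (auto simp: gcyl_factorizes_def length_Suc_conv gcyl_singleton)

lemma not_bernoulli_imp_not_gcyl_factorizes:
  "\<not> bernoulli_measure M \<Longrightarrow> \<exists>k. \<not> gcyl_factorizes M k"
  unfolding bernoulli_measure_def gcyl_factorizes_def by (metis cyl_eq_gcyl)

lemma gcyl_exceeds_product:
  fixes M :: "(nat \<Rightarrow> 'a::countable) measure"
  assumes "prob_space M" and sets_M: "sets M = sets seq_space"
    and factorizes: "gcyl_factorizes M k" and not_factorizes: "\<not> gcyl_factorizes M (Suc k)"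
  shows "\<exists>B p. length B = Suc k \<and> (\<Prod>i<Suc k. measure M (cyl [B ! i])) < measure M (gcyl B p)"
proof (rule ccontr)
  assume no_excess: "\<not> ?thesis"
  obtain B' p where "length B' = Suc k"
    and ne': "measure M (gcyl B' p) \<noteq> (\<Prod>i<Suc k. measure M (cyl [B' ! i]))"
    using not_factorizes unfolding gcyl_factorizes_def by blast
  then obtain B c0 where B': "B' = B @ [c0]" and "length B = k"
    by (metis length_Suc_conv_rev)
  note ne = ne'[unfolded B']
  define P where "P = measure M (gcyl B p)"
  have "finite_measure M"
    using assms(1) by (simp add: prob_space_def)
  have prod_snoc: "(\<Prod>i<Suc k. measure M (cyl [(B @ [c]) ! i])) = P * measure M (cyl [c])" for c
  proof -
    have "(\<Prod>i<k. measure M (cyl [(B @ [c]) ! i])) = P"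
      using factorizes \<open>length B = k\<close> by (simp add: P_def gcyl_factorizes_def nth_append)
    then show ?thesis
      using \<open>length B = k\<close> by (simp add: nth_append)
  qed
  have le: "measure M (gcyl (B @ [c]) p) \<le> P * measure M (cyl [c])" for c
    using no_excess prod_snoc[of c] \<open>length B = k\<close> by (metis length_append_singleton not_le)
  \<comment> \<open>Summing over the last symbol turns the pointwise bounds, one of them strict, into P < P.\<close>
  have sum_gcyl: "((\<lambda>c. measure M (gcyl (B @ [c]) p)) has_sum P) UNIV"
    unfolding P_def by (rule has_sum_measure_gcyl_snoc[OF \<open>finite_measure M\<close> sets_M])
  have "((\<lambda>c. measure M (cyl [c])) has_sum 1) UNIV"
  proof -
    have "measure M (gcyl [] p) = 1"
      using prob_space.prob_space[OF assms(1)] sets_eq_imp_space_eq[OF sets_M] by simp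
    then show ?thesis
      using has_sum_measure_gcyl_snoc[OF \<open>finite_measure M\<close> sets_M, of "[]" p]
      by (simp add: gcyl_singleton)
  qed
  then have sum_cyl: "((\<lambda>c. P * measure M (cyl [c])) has_sum P * 1) UNIV"
    by (rule has_sum_cmult_right)
  have "measure M (gcyl (B @ [c0]) p) < P * measure M (cyl [c0])"
    using le[of c0] ne prod_snoc[of c0] by linarith
  then have "P < P * 1"
    by (intro has_sum_strict_mono[OF sum_gcyl sum_cyl le, of c0]) simp_all
  then show False
    by simp
qed

lemma exists_vec_prec_strict_max:
  fixes f :: "nat list \<Rightarrow> real"
  assumes "length p = d"
    and no_chain: "\<And>Q. (\<And>n. length (Q n) = d) \<Longrightarrow> (\<And>n. vec_prec (Q n) (Q (Suc n))) \<Longrightarrow>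
                        (\<And>n. f p \<le> f (Q n)) \<Longrightarrow> False"
  shows "\<exists>p0. length p0 = d \<and> (\<forall>q. length q = d \<and> vec_prec p0 q \<longrightarrow> f q < f p0)"
proof (rule ccontr)
  assume "\<not> ?thesis"
  then have step: "\<exists>q. length q = d \<and> vec_prec p0 q \<and> f p0 \<le> f q" if "length p0 = d" for p0
    using that by (auto simp: not_less)
  have "\<exists>Q. \<forall>n. (length (Q n) = d \<and> f p \<le> f (Q n)) \<and> vec_prec (Q n) (Q (Suc n))"
  proof (rule dependent_nat_choice)
    show "\<exists>q. length q = d \<and> f p \<le> f q"
      using \<open>length p = d\<close> by blast
    show "\<exists>q'. (length q' = d \<and> f p \<le> f q') \<and> vec_prec q q'"
      if "length q = d \<and> f p \<le> f q" for q n
      using step[of q] that by force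
  qed
  then show False
    using no_chain by blast
qed

lemma incseq_nat_tendsto_or_eventually_const:
  fixes f :: "nat \<Rightarrow> nat"
  assumes "incseq f"
  shows "filterlim f at_top sequentially \<or> (\<exists>c. eventually (\<lambda>n. f n = c) sequentially)"
proof (cases "bdd_above (range f)")
  case True
  then have "finite (range f)"
    by (simp add: bdd_above_nat)
  then obtain n1 where n1: "f n1 = Max (range f)"
    using Max_in[of "range f"] by (metis empty_not_UNIV image_is_empty imageE)
  have "f n = f n1" if "n1 \<le> n" for n
    using \<open>finite (range f)\<close> incseqD[OF assms that] n1 by (metis Max_ge rangeI le_antisym)
  then show ?thesis
    unfolding eventually_sequentially by blast
next
  case False
  have "eventually (\<lambda>n. N \<le> f n) sequentially" for N
  proof -
    obtain n1 where "N \<le> f n1"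
      using False by (auto simp: bdd_above_def not_le intro: less_imp_le)
    then show ?thesis
      using incseqD[OF assms] unfolding eventually_sequentially by (meson order_trans)
  qed
  then show ?thesis
    by (simp add: filterlim_at_top)
qed

lemma vec_prec_chain_coordinates:
  assumes len: "\<And>n. length (Q n) = d" and chain: "\<And>n. vec_prec (Q n) (Q (Suc n))"
  obtains T n0 where "T \<subseteq> {..<d}" and "T \<noteq> {}"
    and "\<And>j. j \<in> T \<Longrightarrow> filterlim (\<lambda>n. Q n ! j) at_top sequentially"
    and "\<And>n j. n0 \<le> n \<Longrightarrow> j < d \<Longrightarrow> j \<notin> T \<Longrightarrow> Q n ! j = Q n0 ! j"
proof -
  define T where "T = {j. j < d \<and> filterlim (\<lambda>n. Q n ! j) at_top sequentially}"
  have "\<exists>c. eventually (\<lambda>n. Q n ! j = c) sequentially" if "j < d" "j \<notin> T" for j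
  proof -
    have "incseq (\<lambda>n. Q n ! j)"
      using chain len \<open>j < d\<close> by (intro incseq_SucI) (simp add: vec_prec_def)
    then show ?thesis
      using incseq_nat_tendsto_or_eventually_const that by (auto simp: T_def)
  qed
  then obtain c where "eventually (\<lambda>n. Q n ! j = c j) sequentially" if "j < d" "j \<notin> T" for j
    by metis
  then have "eventually (\<lambda>n. \<forall>j\<in>{..<d} - T. Q n ! j = c j) sequentially"
    by (intro eventually_ball_finite) auto
  then obtain n0 where n0: "\<And>n j. n0 \<le> n \<Longrightarrow> j < d \<Longrightarrow> j \<notin> T \<Longrightarrow> Q n ! j = c j"
    unfolding eventually_sequentially by blast
  have const: "Q n ! j = Q n0 ! j" if "n0 \<le> n" "j < d" "j \<notin> T" for n j
    using n0[OF that] n0[OF order_refl that(2,3)] by simp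
  \<comment> \<open>Some coordinate grows at every step of the chain, so not all of them can settle.\<close>
  have "T \<noteq> {}"
  proof
    assume "T = {}"
    obtain j where "j < d" "Q n0 ! j < Q (Suc n0) ! j"
      using chain[of n0] len by (auto simp: vec_prec_def)
    with const[of "Suc n0" j] show False
      using \<open>T = {}\<close> by simp
  qed
  show ?thesis
  proof (rule that[OF _ \<open>T \<noteq> {}\<close> _ const])
    show "T \<subseteq> {..<d}"
      by (auto simp: T_def)
    show "filterlim (\<lambda>n. Q n ! j) at_top sequentially" if "j \<in> T" for j
      using that by (simp add: T_def)
  qed
qed

lemma finite_set_strict_enumeration:
  fixes S :: "'a::linorder set"
  assumes "finite S" and "card S = Suc n"
  obtains b where "strict_mono_on {..n} b" and "b ` {..n} = S" and "b 0 = Min S" and "b n = Max S"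
proof -
  define b where "b = (\<lambda>i. sorted_list_of_set S ! i)"
  have strict: "strict_mono_on {..n} b"
  proof (rule strict_mono_onI)
    fix r s
    assume "r \<in> {..n}" "s \<in> {..n}" "r < s"
    then show "b r < b s"
      using sorted_wrt_nth_less[of "(<)" "sorted_list_of_set S" r s] assms(2) by (simp add: b_def)
  qed
  have "b ` {..n} = set (sorted_list_of_set S)"
    unfolding set_conv_nth using assms(2) by (auto simp: b_def image_def less_Suc_eq_le)
  then have range: "b ` {..n} = S"
    using assms(1) by simp
  have le: "b 0 \<le> b i" "b i \<le> b n" if "i \<le> n" for i
    using strict_mono_onD[OF strict, of 0 i] strict_mono_onD[OF strict, of i n] that
    by (cases "i = 0", simp_all, cases "i = n", simp_all)
  have "b 0 = Min S" "b n = Max S"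
    using range le assms(1) by (auto intro!: Min_eqI[symmetric] Max_eqI[symmetric])
  then show ?thesis
    using that strict range by blast
qed

lemma block_boundaries:
  assumes "T \<subseteq> {..<k - 1}" and "T \<noteq> {}"
  obtains b m where "b 0 = 0" and "b (Suc m) = k" and "strict_mono_on {..Suc m} b"
    and "\<And>i. i \<le> m \<Longrightarrow> b (Suc i) - b i < k"
    and "\<And>i. i < m \<Longrightarrow> b (Suc i) - 1 \<in> T"
    and "\<And>i j. i \<le> m \<Longrightarrow> b i \<le> j \<Longrightarrow> Suc j < b (Suc i) \<Longrightarrow> j \<notin> T"
proof -
  \<comment> \<open>The blocks are cut right after each gap in T.\<close>
  define S where "S = insert 0 (insert k (Suc ` T))"
  have "finite S"
    using assms(1) finite_subset by (auto simp: S_def)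
  obtain t where "t \<in> T"
    using assms(2) by blast
  then have "{0, k, Suc t} \<subseteq> S" "card {0, k, Suc t} = 3"
    using assms(1) by (auto simp: S_def)
  then have "3 \<le> card S"
    using card_mono[OF \<open>finite S\<close>] by metis
  define m where "m = card S - 2"
  have "card S = Suc (Suc m)" "0 < m"
    using \<open>3 \<le> card S\<close> by (auto simp: m_def)
  then obtain b where strict: "strict_mono_on {..Suc m} b" and range: "b ` {..Suc m} = S"
    and "b 0 = Min S" and "b (Suc m) = Max S"
    using finite_set_strict_enumeration[OF \<open>finite S\<close>] by blast
  moreover have "Min S = 0" "Max S = k"
    using \<open>finite S\<close> assms(1) by (auto simp: S_def intro!: Min_eqI Max_eqI)
  ultimately have "b 0 = 0" "b (Suc m) = k"
    by simp_all
  have less: "b i < b j" if "i < j" "j \<le> Suc m" for i j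
    using strict_mono_onD[OF strict] that by simp
  have le: "b i \<le> b j" if "i \<le> j" "j \<le> Suc m" for i j
    using less that by (cases "i = j") (auto simp: less_imp_le)
  show ?thesis
  proof (rule that[OF \<open>b 0 = 0\<close> \<open>b (Suc m) = k\<close> strict])
    show "b (Suc i) - b i < k" if "i \<le> m" for i
      using less[of 1 "Suc m"] less[of 0 i] le[of "Suc i" "Suc m"] that \<open>0 < m\<close>
        \<open>b 0 = 0\<close> \<open>b (Suc m) = k\<close>
      by (cases "i = 0") simp_all
    show "b (Suc i) - 1 \<in> T" if "i < m" for i
    proof -
      have "b (Suc i) \<noteq> 0" "b (Suc i) \<noteq> k" "b (Suc i) \<in> S"
        using less[of 0 "Suc i"] less[of "Suc i" "Suc m"] range that \<open>b 0 = 0\<close> \<open>b (Suc m) = k\<close>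
        by auto
      then show ?thesis
        by (auto simp: S_def)
    qed
    show "j \<notin> T" if "i \<le> m" "b i \<le> j" "Suc j < b (Suc i)" for i j
    proof
      assume "j \<in> T"
      then obtain r where "r \<le> Suc m" "b r = Suc j"
        using range by (metis S_def atMost_iff image_eqI imageE insertCI)
      then show False
        using le[of r i] le[of "Suc i" r] that by (cases "r \<le> i") auto
    qed
  qed
qed

lemma funpow_shift: "(shift ^^ n) z = (\<lambda>t. z (n + t))"
  by (induction n arbitrary: z) (auto simp: shift_def)

lemma lessThan_eq_UN_blocks:
  fixes b :: "nat \<Rightarrow> nat"
  assumes "b 0 = 0" and "mono_on {..Suc m} b"
  shows "{..<b (Suc m)} = (\<Union>i\<le>m. {b i..<b (Suc i)})"
  using assms(2)
proof (induction m)
  case (Suc m)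
  have "b (Suc m) \<le> b (Suc (Suc m))"
    using Suc.prems by (auto intro: mono_onD)
  moreover have "mono_on {..Suc m} b"
    using Suc.prems by (rule mono_on_subset) auto
  ultimately have "{..<b (Suc (Suc m))} = (\<Union>i\<le>m. {b i..<b (Suc i)}) \<union> {b (Suc m)..<b (Suc (Suc m))}"
    using Suc.IH ivl_disj_un_one(2)[symmetric] by metis
  then show ?case
    by (simp add: atMost_Suc Un_commute)
qed (simp add: assms(1) lessThan_atLeast0)

lemma prod_lessThan_blocks:
  fixes b :: "nat \<Rightarrow> nat" and g :: "nat \<Rightarrow> 'c::comm_monoid_mult"
  assumes "b 0 = 0" and "mono_on {..Suc m} b"
  shows "(\<Prod>l<b (Suc m). g l) = (\<Prod>i\<le>m. \<Prod>l\<in>{b i..<b (Suc i)}. g l)"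
  using assms(2)
proof (induction m)
  case (Suc m)
  have "b (Suc m) \<le> b (Suc (Suc m))"
    using Suc.prems by (auto intro: mono_onD)
  moreover have "mono_on {..Suc m} b"
    using Suc.prems by (rule mono_on_subset) auto
  moreover have "(\<Prod>l<b (Suc (Suc m)). g l) = (\<Prod>l<b (Suc m). g l) * (\<Prod>l\<in>{b (Suc m)..<b (Suc (Suc m))}. g l)"
    using calculation(1) unfolding lessThan_atLeast0 by (simp add: prod.atLeastLessThan_concat)
  ultimately show ?case
    using Suc.IH by simp
qed (simp add: assms(1) lessThan_atLeast0)

lemma shift_in_gcyl_block_iff:
  assumes "lo \<le> hi" and "hi \<le> length B" and "lo \<le> length p"
  shows "(shift ^^ gap_pos p lo) z \<in> gcyl (take (hi - lo) (drop lo B)) (drop lo p) \<longleftrightarrow>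
         (\<forall>l\<in>{lo..<hi}. z (gap_pos p l) = B ! l)"
proof -
  have "(shift ^^ gap_pos p lo) z \<in> gcyl (take (hi - lo) (drop lo B)) (drop lo p) \<longleftrightarrow>
        (\<forall>l<hi - lo. z (gap_pos p (lo + l)) = B ! (lo + l))"
    using assms by (simp add: gcyl_iff funpow_shift gap_pos_add_drop)
  also have "\<dots> \<longleftrightarrow> (\<forall>l\<in>{lo..<hi}. z (gap_pos p l) = B ! l)"
  proof (intro iffI ballI allI impI)
    fix l
    assume "\<forall>l<hi - lo. z (gap_pos p (lo + l)) = B ! (lo + l)" and "l \<in> {lo..<hi}"
    then show "z (gap_pos p l) = B ! l"
      by (metis atLeastLessThan_iff diff_less_mono le_add_diff_inverse)
  next
    fix l
    assume "\<forall>l\<in>{lo..<hi}. z (gap_pos p l) = B ! l" and "l < hi - lo"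
    then show "z (gap_pos p (lo + l)) = B ! (lo + l)"
      by simp
  qed
  finally show ?thesis .
qed

definition block :: "(nat \<Rightarrow> nat) \<Rightarrow> 'b list \<Rightarrow> nat \<Rightarrow> 'b list" where
  "block b xs i = take (b (Suc i) - b i) (drop (b i) xs)"

lemma gcyl_eq_INT_shift_blocks:
  assumes "b 0 = 0" and "b (Suc m) = length B" and "strict_mono_on {..Suc m} b"
    and "length p = length B - 1" and "length c = length B - 1"
    and agree: "\<And>i j. i \<le> m \<Longrightarrow> b i \<le> j \<Longrightarrow> Suc j < b (Suc i) \<Longrightarrow> p ! j = c ! j"
  shows "gcyl B p = (\<Inter>i\<le>m. (shift ^^ gap_pos p (b i)) -` gcyl (block b B i) (drop (b i) c))"
proof -
  have mono: "mono_on {..Suc m} b"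
    using assms(3) by (rule strict_mono_on_imp_mono_on)
  have bounds: "b i \<le> b (Suc i)" "b (Suc i) \<le> length B" "b i \<le> length p" if "i \<le> m" for i
    using that assms(2,4) strict_mono_onD[OF assms(3), of i "Suc i"]
      mono_onD[OF mono, of "Suc i" "Suc m"] strict_mono_onD[OF assms(3), of i "Suc m"]
    by auto
  have block_gaps: "gcyl (block b B i) (drop (b i) p) = gcyl (block b B i) (drop (b i) c)"
    if "i \<le> m" for i
  proof (rule gcyl_cong)
    fix j
    assume "Suc j < length (block b B i)"
    then show "drop (b i) p ! j = drop (b i) c ! j"
      using agree[OF that, of "b i + j"] bounds[OF that] assms(4,5) by (simp add: block_def)
  qed
  show ?thesis
  proof (rule set_eqI)
    fix z
    have "z \<in> gcyl B p \<longleftrightarrow> (\<forall>l\<in>{..<b (Suc m)}. z (gap_pos p l) = B ! l)"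
      by (simp add: gcyl_iff assms(2) Ball_def)
    also have "\<dots> \<longleftrightarrow> (\<forall>i\<le>m. \<forall>l\<in>{b i..<b (Suc i)}. z (gap_pos p l) = B ! l)"
      unfolding lessThan_eq_UN_blocks[OF assms(1) mono] by blast
    also have "\<dots> \<longleftrightarrow> z \<in> (\<Inter>i\<le>m. (shift ^^ gap_pos p (b i)) -` gcyl (block b B i) (drop (b i) p))"
      using bounds by (auto simp: shift_in_gcyl_block_iff block_def)
    finally show "z \<in> gcyl B p \<longleftrightarrow>
        z \<in> (\<Inter>i\<le>m. (shift ^^ gap_pos p (b i)) -` gcyl (block b B i) (drop (b i) c))"
      using block_gaps by simp
  qed
qed

lemma prod_measure_gcyl_blocks:
  assumes "b 0 = 0" and "b (Suc m) = length B" and "strict_mono_on {..Suc m} b"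
    and factorizes: "\<And>i. i \<le> m \<Longrightarrow> gcyl_factorizes M (b (Suc i) - b i)"
  shows "(\<Prod>i\<le>m. measure M (gcyl (block b B i) (q i))) = (\<Prod>l<length B. measure M (cyl [B ! l]))"
proof -
  have mono: "mono_on {..Suc m} b"
    using assms(3) by (rule strict_mono_on_imp_mono_on)
  have "measure M (gcyl (block b B i) (q i)) = (\<Prod>l\<in>{b i..<b (Suc i)}. measure M (cyl [B ! l]))"
    if "i \<le> m" for i
  proof -
    have "b i \<le> b (Suc i)" "b (Suc i) \<le> length B"
      using that assms(2) mono_onD[OF mono, of i "Suc i"] mono_onD[OF mono, of "Suc i" "Suc m"]
      by auto
    then have "measure M (gcyl (block b B i) (q i)) =
               (\<Prod>l<b (Suc i) - b i. measure M (cyl [B ! (b i + l)]))"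
      using factorizes[OF that] by (simp add: gcyl_factorizes_def block_def)
    also have "\<dots> = (\<Prod>l\<in>{b i..<b (Suc i)}. measure M (cyl [B ! l]))"
      by (simp add: prod.atLeastLessThan_shift_0[of _ "b i"] lessThan_atLeast0 add.commute)
    finally show ?thesis .
  qed
  then have "(\<Prod>i\<le>m. measure M (gcyl (block b B i) (q i)))
             = (\<Prod>i\<le>m. \<Prod>l\<in>{b i..<b (Suc i)}. measure M (cyl [B ! l]))"
    by (intro prod.cong) simp_all
  also have "\<dots> = (\<Prod>l<b (Suc m). measure M (cyl [B ! l]))"
    by (rule prod_lessThan_blocks[OF assms(1) mono, symmetric])
  finally show ?thesis
    by (simp only: assms(2))
qed

lemma mixing_all_orders_tendsto:
  assumes "mixing_all_orders M" and "\<And>i. i \<le> m \<Longrightarrow> A i \<in> sets M"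
    and "\<And>n. t n 0 = 0"
    and apart: "\<And>i N. i < m \<Longrightarrow> eventually (\<lambda>n. t n i + N \<le> t n (Suc i)) sequentially"
  shows "(\<lambda>n. measure M (\<Inter>i\<le>m. (shift ^^ t n i) -` A i \<inter> space M)) \<longlonglongrightarrow> (\<Prod>i\<le>m. measure M (A i))"
  unfolding tendsto_iff dist_real_def
proof (intro allI impI)
  fix e :: real
  assume "0 < e"
  then obtain N where N: "\<And>g. (\<forall>i\<in>{1..m}. N \<le> g i) \<Longrightarrow>
      \<bar>measure M (\<Inter>i\<in>{..m}. (shift ^^ (\<Sum>j\<in>{1..i}. g j)) -` A i \<inter> space M)
         - (\<Prod>i\<in>{..m}. measure M (A i))\<bar> < e"
    using assms(1,2) unfolding mixing_all_orders_def by blast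
  have "eventually (\<lambda>n. \<forall>i\<in>{..<m}. t n i + N \<le> t n (Suc i)) sequentially"
    using apart by (intro eventually_ball_finite) auto
  then show "eventually (\<lambda>n. \<bar>measure M (\<Inter>i\<le>m. (shift ^^ t n i) -` A i \<inter> space M)
      - (\<Prod>i\<le>m. measure M (A i))\<bar> < e) sequentially"
  proof (rule eventually_mono)
    fix n
    assume gaps: "\<forall>i\<in>{..<m}. t n i + N \<le> t n (Suc i)"
    \<comment> \<open>Mixing of all orders is phrased with the increments between consecutive positions.\<close>
    define g where "g i = t n i - t n (i - 1)" for i
    have telescope: "(\<Sum>j\<in>{1..i}. g j) = t n i" if "i \<le> m" for i
      using that
    proof (induction i)
      case (Suc i)
      then have "t n i \<le> t n (Suc i)"
        using gaps[rule_format, of i] by simp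
      then show ?case
        using Suc by (simp add: g_def)
    qed (simp add: assms(3))
    have "N \<le> g i" if "i \<in> {1..m}" for i
    proof -
      have "i - 1 < m"
        using that by auto
      then have "t n (i - 1) + N \<le> t n (Suc (i - 1))"
        using gaps by simp
      then have "t n (i - 1) + N \<le> t n i"
        using that by simp
      then show ?thesis
        unfolding g_def by linarith
    qed
    moreover have "(\<Inter>i\<in>{..m}. (shift ^^ (\<Sum>j\<in>{1..i}. g j)) -` A i \<inter> space M)
                 = (\<Inter>i\<le>m. (shift ^^ t n i) -` A i \<inter> space M)"
      by (intro INF_cong refl) (metis atMost_iff telescope)
    ultimately show "\<bar>measure M (\<Inter>i\<le>m. (shift ^^ t n i) -` A i \<inter> space M)
                       - (\<Prod>i\<le>m. measure M (A i))\<bar> < e"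
      using N[of g] by simp
  qed
qed

lemma gcyl_tendsto_prod:
  fixes M :: "(nat \<Rightarrow> 'a) measure" and B :: "'a list" and Q :: "nat \<Rightarrow> nat list"
  assumes sets_M: "sets M = sets seq_space" and mixing: "mixing_all_orders M"
    and B: "length B = k" and factorizes: "\<And>k'. k' < k \<Longrightarrow> gcyl_factorizes M k'"
    and len: "\<And>n. length (Q n) = k - 1"
    and T: "T \<subseteq> {..<k - 1}" "T \<noteq> {}"
    and diverge: "\<And>j. j \<in> T \<Longrightarrow> filterlim (\<lambda>n. Q n ! j) at_top sequentially"
    and const: "\<And>n j. n0 \<le> n \<Longrightarrow> j < k - 1 \<Longrightarrow> j \<notin> T \<Longrightarrow> Q n ! j = Q n0 ! j"
  shows "(\<lambda>n. measure M (gcyl B (Q n))) \<longlonglongrightarrow> (\<Prod>l<k. measure M (cyl [B ! l]))"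
proof -
  obtain b m where "b 0 = 0" and "b (Suc m) = k" and strict: "strict_mono_on {..Suc m} b"
    and short: "\<And>i. i \<le> m \<Longrightarrow> b (Suc i) - b i < k"
    and cut: "\<And>i. i < m \<Longrightarrow> b (Suc i) - 1 \<in> T"
    and inner: "\<And>i j. i \<le> m \<Longrightarrow> b i \<le> j \<Longrightarrow> Suc j < b (Suc i) \<Longrightarrow> j \<notin> T"
    using block_boundaries[OF T] by blast
  define A where "A i = gcyl (block b B i) (drop (b i) (Q n0))" for i
  \<comment> \<open>From n0 on the gaps inside each block are frozen, so the blocks are the fixed sets A i
      and only the gaps between blocks move.\<close>
  have decompose: "gcyl B (Q n) = (\<Inter>i\<le>m. (shift ^^ gap_pos (Q n) (b i)) -` A i \<inter> space M)"
    if "n0 \<le> n" for n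
  proof -
    have "Q n ! j = Q n0 ! j" if "i \<le> m" "b i \<le> j" "Suc j < b (Suc i)" for i j
    proof (rule const[OF \<open>n0 \<le> n\<close> _ inner[OF that]])
      have "b (Suc i) \<le> k"
        using strict_mono_onD[OF strict, of "Suc i" "Suc m"] \<open>i \<le> m\<close> \<open>b (Suc m) = k\<close>
        by (cases "i = m") simp_all
      then show "j < k - 1"
        using that by simp
    qed
    then show ?thesis
      using gcyl_eq_INT_shift_blocks[OF \<open>b 0 = 0\<close> \<open>b (Suc m) = k\<close>[folded B] strict, of "Q n" "Q n0"]
        len sets_eq_imp_space_eq[OF sets_M]
      by (simp add: A_def B)
  qed
  have apart: "eventually (\<lambda>n. gap_pos (Q n) (b i) + N \<le> gap_pos (Q n) (b (Suc i))) sequentially"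
    if "i < m" for i N
  proof -
    have "b i < b (Suc i)"
      using strict_mono_onD[OF strict, of i "Suc i"] that by simp
    then have gap_less: "gap_pos (Q n) (b i) + Q n ! (b (Suc i) - 1) < gap_pos (Q n) (b (Suc i))"
      for n
      by (rule gap_pos_gap_less)
    have "eventually (\<lambda>n. N \<le> Q n ! (b (Suc i) - 1)) sequentially"
      using diverge[OF cut[OF that]] unfolding filterlim_at_top by blast
    then show ?thesis
    proof (rule eventually_mono)
      show "gap_pos (Q n) (b i) + N \<le> gap_pos (Q n) (b (Suc i))"
        if "N \<le> Q n ! (b (Suc i) - 1)" for n
        using gap_less[of n] that by linarith
    qed
  qed
  have "(\<lambda>n. measure M (\<Inter>i\<le>m. (shift ^^ gap_pos (Q n) (b i)) -` A i \<inter> space M))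
          \<longlonglongrightarrow> (\<Prod>i\<le>m. measure M (A i))"
    using apart \<open>b 0 = 0\<close> unfolding A_def
    by (intro mixing_all_orders_tendsto[OF mixing gcyl_in_sets[OF sets_M]]) simp_all
  moreover have "eventually (\<lambda>n. measure M (\<Inter>i\<le>m. (shift ^^ gap_pos (Q n) (b i)) -` A i \<inter> space M)
                   = measure M (gcyl B (Q n))) sequentially"
    using eventually_ge_at_top[of n0] by eventually_elim (simp add: decompose)
  moreover have "(\<Prod>i\<le>m. measure M (A i)) = (\<Prod>l<k. measure M (cyl [B ! l]))"
    unfolding A_def
    using prod_measure_gcyl_blocks[OF \<open>b 0 = 0\<close> \<open>b (Suc m) = k\<close>[folded B] strict factorizes[OF short]]
    by (simp add: B)
  ultimately show ?thesis
    by (simp add: tendsto_cong)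
qed

lemma gcyl_tendsto_prod_along_chain:
  fixes M :: "(nat \<Rightarrow> 'a) measure" and B :: "'a list" and Q :: "nat \<Rightarrow> nat list"
  assumes "sets M = sets seq_space" and "mixing_all_orders M"
    and "length B = k" and "\<And>k'. k' < k \<Longrightarrow> gcyl_factorizes M k'"
    and len: "\<And>n. length (Q n) = k - 1" and chain: "\<And>n. vec_prec (Q n) (Q (Suc n))"
  shows "(\<lambda>n. measure M (gcyl B (Q n))) \<longlonglongrightarrow> (\<Prod>l<k. measure M (cyl [B ! l]))"
proof (rule vec_prec_chain_coordinates[of Q "k - 1", OF len chain])
  fix T n0
  assume "T \<subseteq> {..<k - 1}" "T \<noteq> {}"
    and "\<And>j. j \<in> T \<Longrightarrow> filterlim (\<lambda>n. Q n ! j) at_top sequentially"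
    and "\<And>n j. n0 \<le> n \<Longrightarrow> j < k - 1 \<Longrightarrow> j \<notin> T \<Longrightarrow> Q n ! j = Q n0 ! j"
  then show ?thesis
    by (intro gcyl_tendsto_prod[OF assms(1-4) len])
qed

lemma not_bernoulli_obtains_least_excess:
  fixes M :: "(nat \<Rightarrow> 'a::countable) measure"
  assumes "prob_space M" and "sets M = sets seq_space" and "\<not> bernoulli_measure M"
  obtains k B p where "2 \<le> k" and "length B = k" and "length p = k - 1"
    and "\<And>k'. k' < k \<Longrightarrow> gcyl_factorizes M k'"
    and "(\<Prod>i<k. measure M (cyl [B ! i])) < measure M (gcyl B p)"
proof -
  define k where "k = (LEAST k. \<not> gcyl_factorizes M k)"
  have not_factorizes: "\<not> gcyl_factorizes M k"
    unfolding k_def using not_bernoulli_imp_not_gcyl_factorizes[OF assms(3)] by (rule LeastI_ex)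
  have factorizes: "gcyl_factorizes M k'" if "k' < k" for k'
    using not_less_Least[of k' "\<lambda>k. \<not> gcyl_factorizes M k"] that by (simp add: k_def)
  have "k \<noteq> 0" "k \<noteq> 1"
    using not_factorizes gcyl_factorizes_0[OF assms(1,2)] gcyl_factorizes_1[of M]
    by (metis One_nat_def)+
  then have "2 \<le> k" and k: "Suc (k - 1) = k"
    by simp_all
  then obtain B p where "length B = k"
    and excess: "(\<Prod>i<k. measure M (cyl [B ! i])) < measure M (gcyl B p)"
    using gcyl_exceeds_product[OF assms(1,2) factorizes[of "k - 1"]] not_factorizes
    unfolding k by auto
  show ?thesis
    by (rule that[OF \<open>2 \<le> k\<close> \<open>length B = k\<close> _ factorizes, of "map (\<lambda>j. p ! j) [0..<k - 1]"])
      (use excess gcyl_truncate_gaps[of B p] \<open>length B = k\<close> in simp_all)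
qed

theorem mainTheorem9:
  fixes M :: "(nat \<Rightarrow> 'a::countable) measure"
  assumes "prob_space M"
    and "sets M = sets seq_space"
    and "shift_invariant M"
    and "mixing_all_orders M"
    and "\<not> bernoulli_measure M"
  shows "\<exists>k\<ge>2. \<exists>B p0. length B = k \<and> length p0 = k - 1 \<and>
           (\<forall>q. length q = k - 1 \<and> vec_prec p0 q \<longrightarrow>
                measure M (gcyl B q) < measure M (gcyl B p0))"
proof (rule not_bernoulli_obtains_least_excess[OF assms(1,2,5)])
  fix k B p
  assume "2 \<le> k" and B: "length B = k" and "length p = k - 1"
    and factorizes: "\<And>k'. k' < k \<Longrightarrow> gcyl_factorizes M k'"
    and excess: "(\<Prod>i<k. measure M (cyl [B ! i])) < measure M (gcyl B p)"
  have "\<exists>p0. length p0 = k - 1 \<and>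
          (\<forall>q. length q = k - 1 \<and> vec_prec p0 q \<longrightarrow> measure M (gcyl B q) < measure M (gcyl B p0))"
  proof (rule exists_vec_prec_strict_max[OF \<open>length p = k - 1\<close>])
    fix Q
    assume len: "\<And>n. length (Q n) = k - 1" and chain: "\<And>n. vec_prec (Q n) (Q (Suc n))"
      and above: "\<And>n. measure M (gcyl B p) \<le> measure M (gcyl B (Q n))"
    have "(\<lambda>n. measure M (gcyl B (Q n))) \<longlonglongrightarrow> (\<Prod>i<k. measure M (cyl [B ! i]))"
      by (rule gcyl_tendsto_prod_along_chain[where Q = Q, OF assms(2,4) B factorizes len chain])
    then have "measure M (gcyl B p) \<le> (\<Prod>i<k. measure M (cyl [B ! i]))"
      using above by (intro LIMSEQ_le_const) auto
    then show False
      using excess by linarith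
  qed
  then show ?thesis
    using \<open>2 \<le> k\<close> B by blast
qed

end
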